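(* Let $\Omega$ be a region of $\mathcal{C}^*_{n,A}$ ($n\ge1$) and let $G_1(\Omega)$ be the graph on $[n]$ in which $\{i,j\}$ ($i\ne j$) is an edge iff $|x_i-x_j|<a_1$ for $\bm x\in\Omega$ (this does not depend on $\bm x\in\Omega$). Then $\mathrm{level}(\Omega)$ equals the number of connected components of $G_1(\Omega)$.
   Context: Let $A=\{a_1,\dots,a_m\}$ with $a_1>\dots>a_m>0$; $\mathcal{C}^*_{n,A}$ is the arrangement in $\mathbb{R}^n$ of hyperplanes $x_i-x_j=a_k$ ($i\ne j$, $1\le k\le m$); regions are connected components of the complement. The level of $X\subseteq\mathbb{R}^n$ is the smallest integer $\ell\ge0$ such that there are a linear subspace $W$ of dimension $\ell$ and $r>0$ with $X\subseteq\{\bm x:\min_{\bm y\in W}\|\bm x-\bm y\|\le r\}$. ($G_1(\Omega)$ is the incomparability graph of the interval order on $[n]$ given by $i<j$ iff $[x_i-a_1,x_i]$ lies entirely left of $[x_j-a_1,x_j]$.) *)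

theory Defs
  imports "HOL-Analysis.Analysis"
begin

text \<open>Union of the hyperplanes x_i - x_j = a (i \<noteq> j, a \<in> A) of the arrangement C*_{n,A},
  coordinates indexed by the finite type 'n (so n = CARD('n) \<ge> 1).\<close>
definition arr_hyperplanes :: "real set \<Rightarrow> (real ^ 'n) set" where
  "arr_hyperplanes A = {x. \<exists>i j a. i \<noteq> j \<and> a \<in> A \<and> x $ i - x $ j = a}"

definition arr_regions :: "real set \<Rightarrow> (real ^ 'n) set set" where
  "arr_regions A = components (UNIV - arr_hyperplanes A)"

definition level :: "('a::euclidean_space) set \<Rightarrow> nat" where
  "level X = (LEAST l. \<exists>W. subspace W \<and> dim W = l \<and>
      (\<exists>r>0. \<forall>x\<in>X. infdist x W \<le> r))"

text \<open>The graph G_1(Omega) on the index set: i,j adjacent iff i \<noteq> j and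
  |x_i - x_j| < a_1 for a (chosen) point x of Omega; a_1 = Max A.\<close>
definition G1 :: "real set \<Rightarrow> (real ^ 'n) set \<Rightarrow> 'n \<Rightarrow> 'n \<Rightarrow> bool" where
  "G1 A \<Omega> i j = (let x = (SOME x. x \<in> \<Omega>) in i \<noteq> j \<and> \<bar>x $ i - x $ j\<bar> < Max A)"

definition num_components :: "'a set \<Rightarrow> ('a \<Rightarrow> 'a \<Rightarrow> bool) \<Rightarrow> nat" where
  "num_components V E =
     card (V // {(u, v). u \<in> V \<and> v \<in> V \<and> (\<lambda>a b. a \<in> V \<and> b \<in> V \<and> E a b)\<^sup>*\<^sup>* u v})"

end

theory Submission
  imports Defs
begin

text \<open>Let \<open>a\<^sub>1 = Max A\<close> and \<open>p \<in> \<Omega>\<close>. A connected region never meets \<open>x\<^sub>i - x\<^sub>j = \<plusminus>a\<^sub>1\<close>, so the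
  graph of pairs with \<open>\<bar>x\<^sub>i - x\<^sub>j\<bar> < a\<^sub>1\<close> is the same for all \<open>x \<in> \<Omega>\<close>; chaining along paths,
  \<open>\<Omega>\<close> stays within bounded distance of the space of vectors constant on the components,
  whose dimension is their number. Conversely, if \<open>s\<close> is the least value of \<open>p\<close> on a
  component, all smaller coordinates of \<open>p\<close> lie more than \<open>a\<^sub>1\<close> below \<open>s\<close>, so raising every
  coordinate \<open>\<ge> s\<close> by \<open>t \<ge> 0\<close> crosses no hyperplane. These rays stay in \<open>\<Omega>\<close>, which forces
  the indicators of the sets \<open>{i. s \<le> p\<^sub>i}\<close> into every subspace near which \<open>\<Omega>\<close> lies, and
  for distinct \<open>s\<close> these indicators are linearly independent.\<close>

lemma level_le_dim:
  assumes "subspace W" and "\<And>x. x \<in> X \<Longrightarrow> infdist x W \<le> r"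
  shows "level X \<le> dim W"
  unfolding level_def
  by (intro Least_le exI[of _ W] conjI exI[of _ "max r 1"])
    (use assms in \<open>auto intro: max.coboundedI1\<close>)

lemma level_attained:
  fixes X :: "'a::euclidean_space set"
  obtains W r where "subspace W" and "dim W = level X" and "\<And>x. x \<in> X \<Longrightarrow> infdist x W \<le> r"
proof -
  let ?P = "\<lambda>l. \<exists>W. subspace W \<and> dim W = l \<and> (\<exists>r>0. \<forall>x\<in>X. infdist x W \<le> r)"
  have "?P (dim (UNIV :: 'a set))" by (intro exI[of _ UNIV] conjI exI[of _ 1]) auto
  then have "?P (level X)" unfolding level_def by (rule LeastI)
  then show ?thesis using that by blast
qed

lemma ray_direction_mem_subspace:
  fixes W :: "'a::euclidean_space set"
  assumes W: "subspace W" and ray: "\<And>t. t \<ge> 0 \<Longrightarrow> infdist (p + t *\<^sub>R v) W \<le> r"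
  shows "v \<in> W"
proof -
  have "closed W" "W \<noteq> {}" using W closed_subspace subspace_0 by blast+
  have scaled: "infdist v W \<le> (r + norm p) / t" if "t > 0" for t
  proof -
    obtain w where "w \<in> W" and w: "infdist (t *\<^sub>R v) W = dist (t *\<^sub>R v) w"
      using infdist_attains_inf[OF \<open>closed W\<close> \<open>W \<noteq> {}\<close>] by metis
    have "infdist (t *\<^sub>R v) W \<le> infdist (p + t *\<^sub>R v) W + dist (t *\<^sub>R v) (p + t *\<^sub>R v)"
      by (rule infdist_triangle)
    also have "\<dots> \<le> r + norm p" using ray[of t] \<open>t > 0\<close> by (simp add: dist_norm)
    finally have near_w: "dist (t *\<^sub>R v) w \<le> r + norm p" using w by simp
    have "(1 / t) *\<^sub>R w \<in> W" using W \<open>w \<in> W\<close> subspace_scale by blast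
    then have "infdist v W \<le> dist v ((1 / t) *\<^sub>R w)" by (rule infdist_le)
    also have "\<dots> = dist (t *\<^sub>R v) w / t"
    proof -
      have "t *\<^sub>R v - w = t *\<^sub>R (v - (1 / t) *\<^sub>R w)" using \<open>t > 0\<close> by (simp add: algebra_simps)
      then show ?thesis using \<open>t > 0\<close> by (simp add: dist_norm)
    qed
    also have "\<dots> \<le> (r + norm p) / t" using near_w \<open>t > 0\<close> by (simp add: divide_right_mono)
    finally show ?thesis .
  qed
  have "r \<ge> 0" using ray[of 0] infdist_nonneg[of "p + 0 *\<^sub>R v" W] by linarith
  have "infdist v W \<le> 0"
  proof (rule field_le_epsilon)
    fix e :: real assume "e > 0"
    define t where "t = (r + norm p + 1) / e"
    have "t > 0" using \<open>r \<ge> 0\<close> \<open>e > 0\<close> by (simp add: t_def add_nonneg_pos)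
    have "r + norm p \<le> e * t" using \<open>e > 0\<close> by (simp add: t_def)
    then have "(r + norm p) / t \<le> e" using \<open>t > 0\<close> by (simp add: pos_divide_le_eq mult.commute)
    then show "infdist v W \<le> 0 + e" using scaled[OF \<open>t > 0\<close>] by simp
  qed
  then have "infdist v W = 0" using infdist_nonneg antisym by blast
  then show ?thesis
    using in_closure_iff_infdist_zero[OF \<open>W \<noteq> {}\<close>] closure_closed[OF \<open>closed W\<close>] by blast
qed

lemma card_independent_ray_directions_le_level:
  fixes X :: "'a::euclidean_space set"
  assumes "independent V" and "\<And>v. v \<in> V \<Longrightarrow> \<exists>p. \<forall>t\<ge>0. p + t *\<^sub>R v \<in> X"
  shows "card V \<le> level X"
proof -
  obtain W r where W: "subspace W" "dim W = level X" and near: "\<And>x. x \<in> X \<Longrightarrow> infdist x W \<le> r"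
    using level_attained by blast
  have "V \<subseteq> W"
  proof
    fix v assume "v \<in> V"
    then obtain p where "\<forall>t\<ge>0. p + t *\<^sub>R v \<in> X" using assms(2) by blast
    then show "v \<in> W" using ray_direction_mem_subspace[OF W(1)] near by blast
  qed
  then have "card V \<le> dim W" using assms(1) by (rule independent_card_le_dim)
  then show ?thesis using W(2) by simp
qed

lemma level_le_card_quotient:
  fixes X :: "(real ^ 'n) set" and R :: "('n \<times> 'n) set"
  assumes R: "equiv UNIV R" and bounded: "\<And>x i j. x \<in> X \<Longrightarrow> (i, j) \<in> R \<Longrightarrow> \<bar>x $ i - x $ j\<bar> \<le> B"
  shows "level X \<le> card (UNIV // R)"
proof -
  define Q where "Q = UNIV // R"
  define ind :: "'n set \<Rightarrow> real ^ 'n" where "ind K = (\<chi> i. if i \<in> K then 1 else 0)" for K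
  define rep where "rep K = (SOME k. k \<in> K)" for K :: "'n set"
  have "finite Q" unfolding Q_def by (simp add: finite_quotient)
  have class_iff: "i \<in> K \<longleftrightarrow> K = R `` {i}" if K: "K \<in> Q" for i K
  proof -
    obtain k where "K = R `` {k}" using K unfolding Q_def by (rule quotientE)
    then show ?thesis using equiv_class_eq_iff[OF R, of k i] by auto
  qed
  have rep_related: "(i, rep (R `` {i})) \<in> R" for i
  proof -
    have "i \<in> R `` {i}" using R by (simp add: equiv_def refl_on_def)
    then show ?thesis unfolding rep_def by (rule someI2) simp
  qed
  have "infdist x (span (ind ` Q)) \<le> real CARD('n) * B" if "x \<in> X" for x
  proof -
    define y where "y = (\<Sum>K\<in>Q. (x $ rep K) *\<^sub>R ind K)"
    have "y \<in> span (ind ` Q)" unfolding y_def by (intro span_sum span_mul span_base) auto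
    have y_component: "y $ i = x $ rep (R `` {i})" for i
    proof -
      have "y $ i = (\<Sum>K\<in>Q. if i \<in> K then x $ rep K else 0)"
        unfolding y_def ind_def by (simp add: sum_component if_distrib cong: if_cong)
      also have "\<dots> = (\<Sum>K\<in>Q. if K = R `` {i} then x $ rep K else 0)"
        by (rule sum.cong) (simp_all add: class_iff)
      also have "\<dots> = x $ rep (R `` {i})" using \<open>finite Q\<close> by (simp add: Q_def quotientI)
      finally show ?thesis .
    qed
    have "infdist x (span (ind ` Q)) \<le> norm (x - y)"
      using infdist_le[OF \<open>y \<in> span (ind ` Q)\<close>] by (simp add: dist_norm)
    also have "\<dots> \<le> (\<Sum>i\<in>UNIV. \<bar>(x - y) $ i\<bar>)" by (rule norm_le_l1_cart)
    also have "\<dots> \<le> (\<Sum>i\<in>(UNIV :: 'n set). B)"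
      by (intro sum_mono) (simp add: y_component bounded[OF \<open>x \<in> X\<close> rep_related])
    finally show ?thesis by simp
  qed
  then have "level X \<le> dim (span (ind ` Q))" by (intro level_le_dim) auto
  also have "\<dots> \<le> card (ind ` Q)" using \<open>finite Q\<close> by (intro dim_le_card) auto
  also have "\<dots> \<le> card Q" using \<open>finite Q\<close> by (rule card_image_le)
  finally show ?thesis unfolding Q_def .
qed

lemma relpowp_abs_diff_le:
  fixes f :: "'a \<Rightarrow> real"
  assumes "\<And>i j. E i j \<Longrightarrow> \<bar>f i - f j\<bar> \<le> c" and "(E ^^ m) i j"
  shows "\<bar>f i - f j\<bar> \<le> real m * c"
  using assms(2)
proof (induction m arbitrary: j)
  case (Suc m)
  then obtain k where "(E ^^ m) i k" and "E k j" by auto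
  then have "\<bar>f i - f k\<bar> \<le> real m * c" and "\<bar>f k - f j\<bar> \<le> c" using Suc.IH assms(1) by auto
  then show ?case by (simp add: algebra_simps)
qed simp

lemma rtranclp_abs_diff_le:
  fixes f :: "'a::finite \<Rightarrow> real"
  assumes "\<And>i j. E i j \<Longrightarrow> \<bar>f i - f j\<bar> \<le> c" and "c \<ge> 0" and "E\<^sup>*\<^sup>* i j"
  shows "\<bar>f i - f j\<bar> \<le> real CARD('a \<times> 'a) * c"
proof -
  let ?R = "{(i, j). E i j}"
  have "(i, j) \<in> ?R\<^sup>*" using assms(3) by (simp add: rtranclp_rtrancl_eq)
  then obtain m where "m \<le> card ?R" and "(i, j) \<in> ?R ^^ m"
    using rtrancl_finite_eq_relpow[of ?R] by auto
  then have "(E ^^ m) i j" using relpowp_relpow_eq[of m ?R] by simp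
  then have "\<bar>f i - f j\<bar> \<le> real m * c"
    using relpowp_abs_diff_le[where f = f and c = c] assms(1) by blast
  also have "\<dots> \<le> real CARD('a \<times> 'a) * c"
  proof -
    have "card ?R \<le> CARD('a \<times> 'a)" by (rule card_mono) auto
    then have "m \<le> CARD('a \<times> 'a)" using \<open>m \<le> card ?R\<close> by linarith
    then show ?thesis using \<open>c \<ge> 0\<close> by (intro mult_right_mono of_nat_mono)
  qed
  finally show ?thesis .
qed

definition superlevel_indicator :: "real ^ 'n \<Rightarrow> real \<Rightarrow> real ^ 'n" where
  "superlevel_indicator p s = (\<chi> i. if s \<le> p $ i then 1 else 0)"

lemma superlevel_indicator_component [simp]:
  "superlevel_indicator p s $ i = (if s \<le> p $ i then 1 else 0)"
  by (simp add: superlevel_indicator_def)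

lemma inj_on_superlevel_indicator: "inj_on (superlevel_indicator p) (range (\<lambda>k. p $ k))"
proof -
  have "superlevel_indicator p s \<noteq> superlevel_indicator p (p $ k)" if "s > p $ k" for s k
  proof -
    have "superlevel_indicator p s $ k \<noteq> superlevel_indicator p (p $ k) $ k" using that by simp
    then show ?thesis by metis
  qed
  then show ?thesis by (intro inj_onI) (metis linorder_neq_iff rangeE)
qed

lemma independent_superlevel_indicators:
  "independent (superlevel_indicator p ` range (\<lambda>k. p $ k))"
  unfolding independent_explicit
proof (intro conjI allI impI ballI)
  let ?T = "range (\<lambda>k. p $ k)" and ?v = "superlevel_indicator p"
  show "finite (?v ` ?T)" by simp
  fix c u
  assume zero: "(\<Sum>u\<in>?v ` ?T. c u *\<^sub>R u) = 0" and "u \<in> ?v ` ?T"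
  show "c u = 0"
  proof (rule ccontr)
    assume "c u \<noteq> 0"
    define S where "S = {s \<in> ?T. c (?v s) \<noteq> 0}"
    have "S \<noteq> {}" "finite S" using \<open>u \<in> ?v ` ?T\<close> \<open>c u \<noteq> 0\<close> by (auto simp: S_def)
    define s0 where "s0 = Min S"
    have "s0 \<in> S" and s0_min: "\<And>s. s \<in> S \<Longrightarrow> s0 \<le> s"
      using \<open>S \<noteq> {}\<close> \<open>finite S\<close> by (simp_all add: s0_def)
    then obtain k where k: "s0 = p $ k" by (auto simp: S_def)
    have "0 = (\<Sum>u\<in>?v ` ?T. c u *\<^sub>R u) $ k" using zero by simp
    also have "\<dots> = (\<Sum>s\<in>?T. c (?v s) * (?v s $ k))"
      by (simp add: sum.reindex[OF inj_on_superlevel_indicator] sum_component)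
    also have "\<dots> = (\<Sum>s\<in>?T. if s = s0 then c (?v s0) else 0)"
    proof (rule sum.cong[OF refl])
      fix s assume "s \<in> ?T"
      show "c (?v s) * (?v s $ k) = (if s = s0 then c (?v s0) else 0)"
      proof (cases "s = s0")
        case False
        then have "?v s $ k = 0" if "c (?v s) \<noteq> 0"
          using s0_min[of s] \<open>s \<in> ?T\<close> that k by (auto simp: S_def)
        then show ?thesis using False by (cases "c (?v s) = 0") auto
      qed (simp add: k)
    qed
    also have "\<dots> = c (?v s0)" using \<open>s0 \<in> S\<close> by (simp add: S_def)
    finally show False using \<open>s0 \<in> S\<close> by (simp add: S_def)
  qed
qed

lemma region_diff_neq:
  fixes \<Omega> :: "(real ^ 'n) set"
  assumes "\<Omega> \<in> arr_regions A" and "x \<in> \<Omega>" and "i \<noteq> j" and "a \<in> A"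
  shows "x $ i - x $ j \<noteq> a"
  using assms in_components_subset unfolding arr_regions_def arr_hyperplanes_def by blast

definition proximity_graph :: "real \<Rightarrow> real ^ 'n \<Rightarrow> 'n \<Rightarrow> 'n \<Rightarrow> bool" where
  "proximity_graph a x i j \<longleftrightarrow> i \<noteq> j \<and> \<bar>x $ i - x $ j\<bar> < a"

definition proximity_classes :: "real \<Rightarrow> real ^ 'n \<Rightarrow> 'n set set" where
  "proximity_classes a x = UNIV // {(i, j). (proximity_graph a x)\<^sup>*\<^sup>* i j}"

lemma equiv_proximity_graph_rtranclp: "equiv UNIV {(i, j). (proximity_graph a x)\<^sup>*\<^sup>* i j}"
proof -
  have "symp (proximity_graph a x)" by (auto simp: symp_def proximity_graph_def abs_minus_commute)
  then show ?thesis unfolding equivp_equiv by (simp add: equivp_rtranclp)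
qed

lemma region_abs_diff_less:
  fixes \<Omega> :: "(real ^ 'n) set"
  assumes \<Omega>: "\<Omega> \<in> arr_regions A" and "p \<in> \<Omega>" and "x \<in> \<Omega>" and "i \<noteq> j" and "a \<in> A"
    and "\<bar>p $ i - p $ j\<bar> < a"
  shows "\<bar>x $ i - x $ j\<bar> < a"
proof (rule ccontr)
  let ?f = "\<lambda>y :: real ^ 'n. y $ i - y $ j"
  have "connected (?f ` \<Omega>)" using \<Omega> unfolding arr_regions_def
    by (intro connected_continuous_image continuous_intros in_components_connected)
  then have interval: "z \<in> ?f ` \<Omega>" if "u \<in> ?f ` \<Omega>" "v \<in> ?f ` \<Omega>" "u \<le> z" "z \<le> v" for u v z
    using that unfolding connected_iff_interval by blast
  have "a \<notin> ?f ` \<Omega>" using region_diff_neq[OF \<Omega> _ \<open>i \<noteq> j\<close> \<open>a \<in> A\<close>] by blast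
  moreover have "-a \<notin> ?f ` \<Omega>"
    using region_diff_neq[OF \<Omega> _ \<open>i \<noteq> j\<close>[symmetric] \<open>a \<in> A\<close>] by fastforce
  moreover assume "\<not> \<bar>x $ i - x $ j\<bar> < a"
  then have "?f p \<le> a \<and> a \<le> ?f x \<or> ?f x \<le> -a \<and> -a \<le> ?f p" using assms(6) by linarith
  ultimately show False using interval assms(2,3) by blast
qed

lemma region_proximity_graph_eq:
  fixes \<Omega> :: "(real ^ 'n) set"
  assumes "\<Omega> \<in> arr_regions A" and "x \<in> \<Omega>" and "y \<in> \<Omega>" and "a \<in> A"
  shows "proximity_graph a x = proximity_graph a y"
  using region_abs_diff_less[OF assms(1,2,3) _ assms(4)] region_abs_diff_less[OF assms(1,3,2) _ assms(4)]
  unfolding proximity_graph_def by blast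

lemma level_region_le_card_proximity_classes:
  fixes \<Omega> :: "(real ^ 'n) set"
  assumes "\<Omega> \<in> arr_regions A" and "x \<in> \<Omega>" and "a \<in> A"
  shows "level \<Omega> \<le> card (proximity_classes a x)"
  unfolding proximity_classes_def
proof (rule level_le_card_quotient[OF equiv_proximity_graph_rtranclp])
  fix y i j
  assume "y \<in> \<Omega>" and "(i, j) \<in> {(i, j). (proximity_graph a x)\<^sup>*\<^sup>* i j}"
  then have reach: "(proximity_graph a y)\<^sup>*\<^sup>* i j"
    using region_proximity_graph_eq[OF assms(1,2) _ assms(3)] by simp
  have edge: "\<bar>y $ k - y $ l\<bar> \<le> \<bar>a\<bar>" if "proximity_graph a y k l" for k l
    using that abs_ge_self[of a] unfolding proximity_graph_def by linarith
  show "\<bar>y $ i - y $ j\<bar> \<le> real CARD('n \<times> 'n) * \<bar>a\<bar>"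
    using rtranclp_abs_diff_le[where f = "\<lambda>k. y $ k", OF edge abs_ge_zero reach] by simp
qed

lemma region_contains_superlevel_ray:
  fixes \<Omega> :: "(real ^ 'n) set"
  assumes \<Omega>: "\<Omega> \<in> arr_regions A" and "p \<in> \<Omega>" and pos: "\<And>b. b \<in> A \<Longrightarrow> 0 < b"
    and gap: "\<And>j b. p $ j < s \<Longrightarrow> b \<in> A \<Longrightarrow> b < s - p $ j" and "t \<ge> 0"
  shows "p + t *\<^sub>R superlevel_indicator p s \<in> \<Omega>"
proof -
  let ?ray = "(\<lambda>t. p + t *\<^sub>R superlevel_indicator p s) ` {0..}"
  have "z \<notin> arr_hyperplanes A" if "z \<in> ?ray" for z
  proof -
    obtain t where "t \<ge> 0" and z: "\<And>k. z $ k = p $ k + (if s \<le> p $ k then t else 0)"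
      using \<open>z \<in> ?ray\<close> by auto
    \<comment> \<open>If only \<open>i\<close> is raised then \<open>p\<^sub>j < s\<close> and \<open>z\<^sub>i - z\<^sub>j \<ge> s - p\<^sub>j > b\<close>; if only \<open>j\<close> is raised
      then \<open>z\<^sub>i - z\<^sub>j < 0 < b\<close>; otherwise \<open>z\<^sub>i - z\<^sub>j = p\<^sub>i - p\<^sub>j\<close>.\<close>
    have "z $ i - z $ j \<noteq> b" if "i \<noteq> j" and "b \<in> A" for i j b
      using region_diff_neq[OF \<Omega> \<open>p \<in> \<Omega>\<close> \<open>i \<noteq> j\<close> \<open>b \<in> A\<close>] gap[of j b] pos[OF \<open>b \<in> A\<close>]
        \<open>b \<in> A\<close> \<open>t \<ge> 0\<close> unfolding z by (smt (verit))
    then show ?thesis unfolding arr_hyperplanes_def by blast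
  qed
  then have "?ray \<subseteq> UNIV - arr_hyperplanes A" by blast
  moreover have "connected ?ray"
    by (intro connected_continuous_image continuous_intros connected_Ici)
  moreover have "p \<in> \<Omega> \<inter> ?ray" using \<open>p \<in> \<Omega>\<close> by (auto intro: image_eqI[of _ _ 0])
  ultimately have "?ray \<subseteq> \<Omega>"
    using components_maximal[OF \<Omega>[unfolded arr_regions_def]] by blast
  then show ?thesis using \<open>t \<ge> 0\<close> by blast
qed

definition gap_values :: "real \<Rightarrow> real ^ 'n \<Rightarrow> real set" where
  "gap_values a p = {s \<in> range (\<lambda>k. p $ k). \<forall>j. p $ j < s \<longrightarrow> a < s - p $ j}"

lemma card_proximity_classes_le_card_gap_values:
  fixes p :: "real ^ 'n"
  assumes "0 < a" and no_tie: "\<And>i j. i \<noteq> j \<Longrightarrow> p $ i - p $ j \<noteq> a"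
  shows "card (proximity_classes a p) \<le> card (gap_values a p)"
proof -
  let ?E = "proximity_graph a p"
  define R where "R = {(i, j). ?E\<^sup>*\<^sup>* i j}"
  have R: "equiv UNIV R" unfolding R_def by (rule equiv_proximity_graph_rtranclp)
  have closed: "j \<in> K" if "K \<in> UNIV // R" and "k \<in> K" and "?E k j" for K k j
    using that unfolding R_def by (auto elim!: quotientE intro: rtranclp.rtrancl_into_rtrancl)
  define g where "g K = Min ((\<lambda>i. p $ i) ` K)" for K
  have g_attained: "\<exists>k\<in>K. g K = p $ k \<and> (\<forall>j\<in>K. p $ k \<le> p $ j)" if "K \<in> UNIV // R" for K
  proof -
    have "K \<noteq> {}" using R that by (rule in_quotient_imp_non_empty)
    then have "g K \<in> (\<lambda>i. p $ i) ` K" and "\<forall>j\<in>K. g K \<le> p $ j" by (simp_all add: g_def)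
    then show ?thesis by auto
  qed
  have "g K \<in> gap_values a p" if K: "K \<in> UNIV // R" for K
  proof -
    obtain k where "k \<in> K" and gk: "g K = p $ k" and k_min: "\<forall>j\<in>K. p $ k \<le> p $ j"
      using g_attained[OF K] by blast
    have "a < p $ k - p $ j" if "p $ j < p $ k" for j
    proof (rule ccontr)
      assume "\<not> a < p $ k - p $ j"
      moreover have "k \<noteq> j" using that by auto
      ultimately have "?E k j" using no_tie[of k j] that unfolding proximity_graph_def by auto
      then have "j \<in> K" using closed[OF K \<open>k \<in> K\<close>] by blast
      then show False using k_min that by force
    qed
    then show ?thesis unfolding gap_values_def gk by auto
  qed
  moreover have "inj_on g (UNIV // R)"
  proof (rule inj_onI)
    fix K L assume K: "K \<in> UNIV // R" and L: "L \<in> UNIV // R" and "g K = g L"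
    then obtain k l where "k \<in> K" "l \<in> L" and "p $ k = p $ l" using g_attained by metis
    then have "l \<in> K" using closed[OF K \<open>k \<in> K\<close>, of l] \<open>0 < a\<close>
      by (cases "k = l") (auto simp: proximity_graph_def)
    then show "K = L" using quotient_disj[OF R K L] \<open>l \<in> L\<close> by blast
  qed
  moreover have "finite (gap_values a p)" unfolding gap_values_def by simp
  ultimately have "card (UNIV // R) \<le> card (gap_values a p)" by (intro card_inj_on_le) auto
  then show ?thesis unfolding proximity_classes_def R_def .
qed

lemma card_proximity_classes_le_level_region:
  fixes \<Omega> :: "(real ^ 'n) set"
  assumes \<Omega>: "\<Omega> \<in> arr_regions A" and "p \<in> \<Omega>" and "finite A" and "A \<noteq> {}"
    and pos: "\<And>b. b \<in> A \<Longrightarrow> 0 < b"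
  shows "card (proximity_classes (Max A) p) \<le> level \<Omega>"
proof -
  let ?T = "gap_values (Max A) p" and ?v = "superlevel_indicator p"
  have "Max A \<in> A" using \<open>finite A\<close> \<open>A \<noteq> {}\<close> by simp
  have "card (proximity_classes (Max A) p) \<le> card ?T"
    using region_diff_neq[OF \<Omega> \<open>p \<in> \<Omega>\<close> _ \<open>Max A \<in> A\<close>] pos[OF \<open>Max A \<in> A\<close>]
    by (intro card_proximity_classes_le_card_gap_values)
  also have "card ?T = card (?v ` ?T)"
    by (intro card_image[symmetric] inj_on_subset[OF inj_on_superlevel_indicator])
      (auto simp: gap_values_def)
  also have "\<dots> \<le> level \<Omega>"
  proof (rule card_independent_ray_directions_le_level)
    show "independent (?v ` ?T)"
      by (rule independent_mono[OF independent_superlevel_indicators]) (auto simp: gap_values_def)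
  next
    fix v assume "v \<in> ?v ` ?T"
    then obtain s where "s \<in> ?T" and v: "v = ?v s" by blast
    have "b < s - p $ j" if "p $ j < s" and "b \<in> A" for j b
      using \<open>s \<in> ?T\<close> that Max_ge[OF \<open>finite A\<close> \<open>b \<in> A\<close>] unfolding gap_values_def by force
    then show "\<exists>q. \<forall>t\<ge>0. q + t *\<^sub>R v \<in> \<Omega>"
      using region_contains_superlevel_ray[OF \<Omega> \<open>p \<in> \<Omega>\<close> pos] v by blast
  qed
  finally show ?thesis .
qed

theorem theorem3p4:
  fixes A :: "real set" and \<Omega> :: "(real ^ 'n) set"
  assumes "finite A" and "A \<noteq> {}" and "\<forall>a\<in>A. a > 0"
    and "\<Omega> \<in> arr_regions A"
  shows "level \<Omega> = num_components (UNIV :: 'n set) (G1 A \<Omega>)"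
proof -
  define p where "p = (SOME x. x \<in> \<Omega>)"
  have "p \<in> \<Omega>"
    using assms(4) in_components_nonempty unfolding p_def arr_regions_def by (metis some_in_eq)
  have "G1 A \<Omega> = proximity_graph (Max A) p"
    by (simp add: fun_eq_iff G1_def Let_def proximity_graph_def p_def)
  then have "num_components UNIV (G1 A \<Omega>) = card (proximity_classes (Max A) p)"
    by (simp add: num_components_def proximity_classes_def)
  moreover have "level \<Omega> \<le> card (proximity_classes (Max A) p)"
    using level_region_le_card_proximity_classes[OF assms(4) \<open>p \<in> \<Omega>\<close>] assms(1,2) by simp
  moreover have "card (proximity_classes (Max A) p) \<le> level \<Omega>"
    using card_proximity_classes_le_level_region[OF assms(4) \<open>p \<in> \<Omega>\<close> assms(1,2)] assms(3) by blast
  ultimately show ?thesis by linarith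
qed

end
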